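(* Let $(\mathcal G,\lambda)$ be a small morphism-colored groupoid satisfying the inverse-compatibility condition. Then the relation $\overset{0}{\sim}$ on $I_0$ is an equivalence relation.
   Context: A morphism-colored category is a pair $(\mathcal C,\lambda)$ where $\mathcal C$ is a category and $\lambda$ assigns to each morphism $f$ a color $\lambda(f)$, such that: whenever $g,f_1,f_2$ with $(f_1,f_2)$ composable satisfy $\lambda(g)=\lambda(f_1\circ f_2)$, there exist composable $g_1,g_2$ with $g=g_1\circ g_2$, $\lambda(g_1)=\lambda(f_1)$, $\lambda(g_2)=\lambda(f_2)$. It is a morphism-colored groupoid if $\mathcal C$ is a groupoid, and small if $\mathcal C$ is small and $\lambda$ is a map into a set. Inverse-compatibility: $\lambda(f)=\lambda(g)$ implies $\lambda(f^{-1})=\lambda(g^{-1})$. $I_1=\lambda(\mathrm{Mor}(\mathcal G))$, $\lambda_1$ the corestriction of $\lambda$ to $I_1$; $I_0=\{\lambda(\mathrm{id}_x):x\in\mathrm{Obj}(\mathcal G)\}$, $\lambda_0(x)=\lambda(\mathrm{id}_x)$. The equivalence relation $\overset{1}{\sim}$ on $I_1$: $\lambda(f_1\circ\cdots\circ f_l)\overset{1}{\sim}\lambda(g_1\circ\cdots\circ g_l)$ for every $l\ge1$ and all composable sequences with $\lambda(f_i)=\lambda(g_i)$ for all $i$ (no other pairs); $s_1:I_1\to\bar I_1$ the quotient map. The relation $\overset{0}{\sim}$ on $I_0$: declare $\lambda_0(\mathrm{source}(f))\overset{0}{\sim}\lambda_0(\mathrm{source}(g))$ for all $f,g\in\mathrm{Mor}(\mathcal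 G)$ with $(s_1\circ\lambda_1)(f)=(s_1\circ\lambda_1)(g)$ (no other pairs). *)

theory Defs
  imports Main
begin

text \<open>A small category is given by a set of objects Obj, a set of morphisms Mor,
  source and target maps, a composition cmp (where cmp f g means f after g,
  defined when source f = target g) and identities ident.\<close>

definition is_category ::
  "'o set \<Rightarrow> 'm set \<Rightarrow> ('m \<Rightarrow> 'o) \<Rightarrow> ('m \<Rightarrow> 'o) \<Rightarrow> ('m \<Rightarrow> 'm \<Rightarrow> 'm) \<Rightarrow> ('o \<Rightarrow> 'm) \<Rightarrow> bool"
where
  "is_category Obj Mor src tgt cmp ident \<longleftrightarrow>
     (\<forall>f\<in>Mor. src f \<in> Obj \<and> tgt f \<in> Obj) \<and>
     (\<forall>x\<in>Obj. ident x \<in> Mor \<and> src (ident x) = x \<and> tgt (ident x) = x) \<and>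
     (\<forall>f\<in>Mor. \<forall>g\<in>Mor. src f = tgt g \<longrightarrow>
        cmp f g \<in> Mor \<and> src (cmp f g) = src g \<and> tgt (cmp f g) = tgt f) \<and>
     (\<forall>f\<in>Mor. \<forall>g\<in>Mor. \<forall>h\<in>Mor. src f = tgt g \<longrightarrow> src g = tgt h \<longrightarrow>
        cmp (cmp f g) h = cmp f (cmp g h)) \<and>
     (\<forall>f\<in>Mor. cmp f (ident (src f)) = f \<and> cmp (ident (tgt f)) f = f)"

definition is_inverse ::
  "'m set \<Rightarrow> ('m \<Rightarrow> 'o) \<Rightarrow> ('m \<Rightarrow> 'o) \<Rightarrow> ('m \<Rightarrow> 'm \<Rightarrow> 'm) \<Rightarrow> ('o \<Rightarrow> 'm) \<Rightarrow> 'm \<Rightarrow> 'm \<Rightarrow> bool"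
where
  "is_inverse Mor src tgt cmp ident f g \<longleftrightarrow>
     g \<in> Mor \<and> src g = tgt f \<and> tgt g = src f \<and>
     cmp f g = ident (tgt f) \<and> cmp g f = ident (src f)"

definition is_groupoid ::
  "'o set \<Rightarrow> 'm set \<Rightarrow> ('m \<Rightarrow> 'o) \<Rightarrow> ('m \<Rightarrow> 'o) \<Rightarrow> ('m \<Rightarrow> 'm \<Rightarrow> 'm) \<Rightarrow> ('o \<Rightarrow> 'm) \<Rightarrow> bool"
where
  "is_groupoid Obj Mor src tgt cmp ident \<longleftrightarrow>
     is_category Obj Mor src tgt cmp ident \<and>
     (\<forall>f\<in>Mor. \<exists>g. is_inverse Mor src tgt cmp ident f g)"

text \<open>The inverse f^{-1} of a morphism (unique in a groupoid).\<close>
definition grpd_inv ::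
  "'m set \<Rightarrow> ('m \<Rightarrow> 'o) \<Rightarrow> ('m \<Rightarrow> 'o) \<Rightarrow> ('m \<Rightarrow> 'm \<Rightarrow> 'm) \<Rightarrow> ('o \<Rightarrow> 'm) \<Rightarrow> 'm \<Rightarrow> 'm"
where
  "grpd_inv Mor src tgt cmp ident f = (THE g. is_inverse Mor src tgt cmp ident f g)"

definition morphism_colored ::
  "'m set \<Rightarrow> ('m \<Rightarrow> 'o) \<Rightarrow> ('m \<Rightarrow> 'o) \<Rightarrow> ('m \<Rightarrow> 'm \<Rightarrow> 'm) \<Rightarrow> ('m \<Rightarrow> 'c) \<Rightarrow> bool"
where
  "morphism_colored Mor src tgt cmp lam \<longleftrightarrow>
     (\<forall>g\<in>Mor. \<forall>f1\<in>Mor. \<forall>f2\<in>Mor. src f1 = tgt f2 \<longrightarrow> lam g = lam (cmp f1 f2) \<longrightarrow>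
        (\<exists>g1\<in>Mor. \<exists>g2\<in>Mor. src g1 = tgt g2 \<and> g = cmp g1 g2 \<and>
            lam g1 = lam f1 \<and> lam g2 = lam f2))"

definition inverse_compatible ::
  "'m set \<Rightarrow> ('m \<Rightarrow> 'o) \<Rightarrow> ('m \<Rightarrow> 'o) \<Rightarrow> ('m \<Rightarrow> 'm \<Rightarrow> 'm) \<Rightarrow> ('o \<Rightarrow> 'm) \<Rightarrow> ('m \<Rightarrow> 'c) \<Rightarrow> bool"
where
  "inverse_compatible Mor src tgt cmp ident lam \<longleftrightarrow>
     (\<forall>f\<in>Mor. \<forall>g\<in>Mor. lam f = lam g \<longrightarrow>
        lam (grpd_inv Mor src tgt cmp ident f) = lam (grpd_inv Mor src tgt cmp ident g))"

fun cmp_list :: "('m \<Rightarrow> 'm \<Rightarrow> 'm) \<Rightarrow> 'm list \<Rightarrow> 'm" where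
  "cmp_list cmp [] = undefined"
| "cmp_list cmp [f] = f"
| "cmp_list cmp (f # g # fs) = cmp f (cmp_list cmp (g # fs))"

definition composable_seq :: "'m set \<Rightarrow> ('m \<Rightarrow> 'o) \<Rightarrow> ('m \<Rightarrow> 'o) \<Rightarrow> 'm list \<Rightarrow> bool" where
  "composable_seq Mor src tgt fs \<longleftrightarrow>
     fs \<noteq> [] \<and> set fs \<subseteq> Mor \<and>
     (\<forall>i. Suc i < length fs \<longrightarrow> src (fs ! i) = tgt (fs ! Suc i))"

definition I1 :: "'m set \<Rightarrow> ('m \<Rightarrow> 'c) \<Rightarrow> 'c set" where
  "I1 Mor lam = lam ` Mor"

definition I0 :: "'o set \<Rightarrow> ('o \<Rightarrow> 'm) \<Rightarrow> ('m \<Rightarrow> 'c) \<Rightarrow> 'c set" where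
  "I0 Obj ident lam = {lam (ident x) | x. x \<in> Obj}"

text \<open>The relation ~1 on I1 (exactly the listed pairs).\<close>
definition rel1 ::
  "'m set \<Rightarrow> ('m \<Rightarrow> 'o) \<Rightarrow> ('m \<Rightarrow> 'o) \<Rightarrow> ('m \<Rightarrow> 'm \<Rightarrow> 'm) \<Rightarrow> ('m \<Rightarrow> 'c) \<Rightarrow> 'c rel"
where
  "rel1 Mor src tgt cmp lam =
     {(lam (cmp_list cmp fs), lam (cmp_list cmp gs)) | fs gs.
        composable_seq Mor src tgt fs \<and> composable_seq Mor src tgt gs \<and>
        length fs = length gs \<and> (\<forall>i < length fs. lam (fs ! i) = lam (gs ! i))}"

definition s1 ::
  "'m set \<Rightarrow> ('m \<Rightarrow> 'o) \<Rightarrow> ('m \<Rightarrow> 'o) \<Rightarrow> ('m \<Rightarrow> 'm \<Rightarrow> 'm) \<Rightarrow> ('m \<Rightarrow> 'c) \<Rightarrow> 'c \<Rightarrow> 'c set"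
where
  "s1 Mor src tgt cmp lam x = rel1 Mor src tgt cmp lam `` {x}"

text \<open>The relation ~0 on I0 (exactly the listed pairs).\<close>
definition rel0 ::
  "'m set \<Rightarrow> ('m \<Rightarrow> 'o) \<Rightarrow> ('m \<Rightarrow> 'o) \<Rightarrow> ('m \<Rightarrow> 'm \<Rightarrow> 'm) \<Rightarrow> ('o \<Rightarrow> 'm) \<Rightarrow> ('m \<Rightarrow> 'c) \<Rightarrow> 'c rel"
where
  "rel0 Mor src tgt cmp ident lam =
     {(lam (ident (src f)), lam (ident (src g))) | f g.
        f \<in> Mor \<and> g \<in> Mor \<and>
        s1 Mor src tgt cmp lam (lam f) = s1 Mor src tgt cmp lam (lam g)}"

end

theory Submission
  imports Defs
begin

text \<open>Two colors in \<open>I\<^sub>0\<close> are \<open>\<sim>\<^sub>0\<close>-related iff they are the identity colors at the sources of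
  two morphisms of equal color: a \<open>\<sim>\<^sub>1\<close>-relation between composites is witnessed by their last
  factors, and the coloring condition, applied to the factorization \<open>f = f \<circ> id\<close>, transports the
  source of a morphism to any morphism of the same color. Transitivity then follows by transporting
  through the common middle color.\<close>

locale morphism_colored_category =
  fixes Obj :: "'o set" and Mor :: "'m set"
    and src tgt :: "'m \<Rightarrow> 'o" and cmp :: "'m \<Rightarrow> 'm \<Rightarrow> 'm"
    and ident :: "'o \<Rightarrow> 'm" and lam :: "'m \<Rightarrow> 'c"
  assumes category: "is_category Obj Mor src tgt cmp ident"
    and colored: "morphism_colored Mor src tgt cmp lam"
begin

lemma src_in_Obj: "f \<in> Mor \<Longrightarrow> src f \<in> Obj"
  using category unfolding is_category_def by blast

lemma ident_in_Mor: "x \<in> Obj \<Longrightarrow> ident x \<in> Mor"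
  and src_ident: "x \<in> Obj \<Longrightarrow> src (ident x) = x"
  and tgt_ident: "x \<in> Obj \<Longrightarrow> tgt (ident x) = x"
  using category unfolding is_category_def by blast+

lemma cmp_in_Mor: "f \<in> Mor \<Longrightarrow> g \<in> Mor \<Longrightarrow> src f = tgt g \<Longrightarrow> cmp f g \<in> Mor"
  and src_cmp: "f \<in> Mor \<Longrightarrow> g \<in> Mor \<Longrightarrow> src f = tgt g \<Longrightarrow> src (cmp f g) = src g"
  and tgt_cmp: "f \<in> Mor \<Longrightarrow> g \<in> Mor \<Longrightarrow> src f = tgt g \<Longrightarrow> tgt (cmp f g) = tgt f"
  using category unfolding is_category_def by blast+

lemma cmp_ident_right: "f \<in> Mor \<Longrightarrow> cmp f (ident (src f)) = f"
  using category unfolding is_category_def by blast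

lemma colored_factor:
  assumes "g \<in> Mor" "f1 \<in> Mor" "f2 \<in> Mor" "src f1 = tgt f2" "lam g = lam (cmp f1 f2)"
  obtains g1 g2 where "g1 \<in> Mor" "g2 \<in> Mor" "src g1 = tgt g2" "g = cmp g1 g2"
    "lam g1 = lam f1" "lam g2 = lam f2"
  using colored assms unfolding morphism_colored_def by meson

lemma source_color_transfer:
  assumes "f \<in> Mor" "g \<in> Mor" "lam f = lam g"
  obtains h where "h \<in> Mor" "src h = src f" "lam h = lam (ident (src g))"
proof -
  have g: "src g \<in> Obj" using \<open>g \<in> Mor\<close> by (rule src_in_Obj)
  have "lam f = lam (cmp g (ident (src g)))"
    using assms cmp_ident_right by simp
  then obtain g1 g2 where "g1 \<in> Mor" "g2 \<in> Mor" "src g1 = tgt g2" "f = cmp g1 g2"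
    "lam g2 = lam (ident (src g))"
    using colored_factor[OF \<open>f \<in> Mor\<close> \<open>g \<in> Mor\<close> ident_in_Mor[OF g]] g tgt_ident by metis
  then show thesis
    using that src_cmp by metis
qed

lemma composable_seq_Cons_Cons:
  "composable_seq Mor src tgt (f # g # fs) \<longleftrightarrow>
     f \<in> Mor \<and> src f = tgt g \<and> composable_seq Mor src tgt (g # fs)"
  unfolding composable_seq_def by (auto simp: less_Suc_eq_0_disj)

lemma cmp_list_in_Mor:
  "composable_seq Mor src tgt fs \<Longrightarrow>
     cmp_list cmp fs \<in> Mor \<and> tgt (cmp_list cmp fs) = tgt (hd fs)"
proof (induction fs rule: induct_list012)
  case (3 f g fs)
  then show ?case
    by (simp add: composable_seq_Cons_Cons cmp_in_Mor tgt_cmp)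
qed (simp_all add: composable_seq_def)

lemma source_color_of_last_factor:
  assumes "composable_seq Mor src tgt fs" "h \<in> Mor" "lam h = lam (cmp_list cmp fs)"
  obtains h' where "h' \<in> Mor" "src h' = src h" "lam h' = lam (last fs)"
  using assms
proof (induction fs arbitrary: h rule: induct_list012)
  case (3 f g fs)
  then have f: "f \<in> Mor" "src f = tgt g" and gfs: "composable_seq Mor src tgt (g # fs)"
    by (simp_all add: composable_seq_Cons_Cons)
  have rest: "cmp_list cmp (g # fs) \<in> Mor" "src f = tgt (cmp_list cmp (g # fs))"
    using cmp_list_in_Mor[OF gfs] f by simp_all
  have "lam h = lam (cmp f (cmp_list cmp (g # fs)))"
    using "3.prems" by simp
  then obtain h1 h2 where "h1 \<in> Mor" "h2 \<in> Mor" "src h1 = tgt h2" "h = cmp h1 h2"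
    "lam h2 = lam (cmp_list cmp (g # fs))"
    using colored_factor[OF \<open>h \<in> Mor\<close> \<open>f \<in> Mor\<close> rest] by blast
  with "3.IH"(2)[OF _ gfs] "3.prems"(1) src_cmp show ?case by auto
qed (auto simp: composable_seq_def)

definition source_color_rel :: "'c rel" where
  "source_color_rel =
     {(lam (ident (src p)), lam (ident (src q))) | p q. p \<in> Mor \<and> q \<in> Mor \<and> lam p = lam q}"

lemma source_color_relI:
  "p \<in> Mor \<Longrightarrow> q \<in> Mor \<Longrightarrow> lam p = lam q \<Longrightarrow>
     (lam (ident (src p)), lam (ident (src q))) \<in> source_color_rel"
  unfolding source_color_rel_def by blast

lemma source_color_relE:
  assumes "(a, b) \<in> source_color_rel"
  obtains p q where "p \<in> Mor" "q \<in> Mor" "lam p = lam q"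
    "a = lam (ident (src p))" "b = lam (ident (src q))"
  using assms unfolding source_color_rel_def by blast

lemma rel1_refl: "g \<in> Mor \<Longrightarrow> (lam g, lam g) \<in> rel1 Mor src tgt cmp lam"
  unfolding rel1_def
  by (rule CollectI, rule exI[of _ "[g]"], rule exI[of _ "[g]"]) (simp add: composable_seq_def)

lemma rel1_same_color_at_sources:
  assumes "(lam f, lam g) \<in> rel1 Mor src tgt cmp lam" "f \<in> Mor" "g \<in> Mor"
  obtains f' g' where "f' \<in> Mor" "g' \<in> Mor" "src f' = src f" "src g' = src g" "lam f' = lam g'"
proof -
  obtain fs gs where fs: "composable_seq Mor src tgt fs" "lam f = lam (cmp_list cmp fs)"
    and gs: "composable_seq Mor src tgt gs" "lam g = lam (cmp_list cmp gs)"
    and same: "length fs = length gs" "\<forall>i < length fs. lam (fs ! i) = lam (gs ! i)"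
    using assms(1) unfolding rel1_def by auto
  obtain f' where "f' \<in> Mor" "src f' = src f" "lam f' = lam (last fs)"
    using source_color_of_last_factor[OF fs(1) \<open>f \<in> Mor\<close> fs(2)] .
  moreover obtain g' where "g' \<in> Mor" "src g' = src g" "lam g' = lam (last gs)"
    using source_color_of_last_factor[OF gs(1) \<open>g \<in> Mor\<close> gs(2)] .
  moreover have "lam (last fs) = lam (last gs)"
    using fs(1) gs(1) same by (simp add: composable_seq_def last_conv_nth)
  ultimately show thesis using that by simp
qed

lemma rel0_eq_source_color_rel: "rel0 Mor src tgt cmp ident lam = source_color_rel"
proof (intro equalityI subsetI)
  fix z assume "z \<in> rel0 Mor src tgt cmp ident lam"
  then obtain f g where z: "z = (lam (ident (src f)), lam (ident (src g)))" "f \<in> Mor" "g \<in> Mor"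
    and s1: "s1 Mor src tgt cmp lam (lam f) = s1 Mor src tgt cmp lam (lam g)"
    unfolding rel0_def by blast
  have "lam g \<in> s1 Mor src tgt cmp lam (lam g)"
    unfolding s1_def using rel1_refl[OF \<open>g \<in> Mor\<close>] by simp
  then have "lam g \<in> s1 Mor src tgt cmp lam (lam f)"
    by (simp only: s1)
  then have "(lam f, lam g) \<in> rel1 Mor src tgt cmp lam"
    unfolding s1_def by simp
  then obtain f' g' where "f' \<in> Mor" "g' \<in> Mor" "src f' = src f" "src g' = src g" "lam f' = lam g'"
    using rel1_same_color_at_sources z(2,3) by metis
  then show "z \<in> source_color_rel"
    unfolding z(1) by (metis source_color_relI)
next
  fix z assume "z \<in> source_color_rel"
  then obtain p q where "p \<in> Mor" "q \<in> Mor" "lam p = lam q"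
    "z = (lam (ident (src p)), lam (ident (src q)))"
    by (metis surj_pair source_color_relE)
  then show "z \<in> rel0 Mor src tgt cmp ident lam"
    unfolding rel0_def by (intro CollectI exI[of _ p] exI[of _ q]) simp
qed

lemma equiv_source_color_rel: "equiv (I0 Obj ident lam) source_color_rel"
proof (rule equivI)
  show "source_color_rel \<subseteq> I0 Obj ident lam \<times> I0 Obj ident lam"
  proof (rule subrelI)
    fix a b assume "(a, b) \<in> source_color_rel"
    then show "(a, b) \<in> I0 Obj ident lam \<times> I0 Obj ident lam"
      unfolding I0_def by (blast elim: source_color_relE dest: src_in_Obj)
  qed
next
  show "refl_on (I0 Obj ident lam) source_color_rel"
  proof (rule refl_onI)
    fix a assume "a \<in> I0 Obj ident lam"
    then obtain x where "x \<in> Obj" "a = lam (ident x)" unfolding I0_def by blast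
    then show "(a, a) \<in> source_color_rel"
      using source_color_relI[of "ident x" "ident x"] by (simp add: ident_in_Mor src_ident)
  qed
next
  show "sym source_color_rel"
    by (rule symI) (metis source_color_relE source_color_relI)
next
  show "trans source_color_rel"
  proof (rule transI)
    fix a b c assume "(a, b) \<in> source_color_rel" "(b, c) \<in> source_color_rel"
    then obtain p q p' q' where "p \<in> Mor" "q \<in> Mor" "lam p = lam q"
      and "p' \<in> Mor" "q' \<in> Mor" "lam p' = lam q'"
      and abc: "a = lam (ident (src p))" "b = lam (ident (src q))" "b = lam (ident (src p'))"
        "c = lam (ident (src q'))"
      by (elim source_color_relE) blast
    obtain h where "h \<in> Mor" "src h = src p" "lam h = lam (ident (src q))"
      using source_color_transfer \<open>p \<in> Mor\<close> \<open>q \<in> Mor\<close> \<open>lam p = lam q\<close> .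
    moreover obtain k where "k \<in> Mor" "src k = src q'" "lam k = lam (ident (src p'))"
      using source_color_transfer \<open>q' \<in> Mor\<close> \<open>p' \<in> Mor\<close> \<open>lam p' = lam q'\<close>[symmetric] .
    ultimately show "(a, c) \<in> source_color_rel"
      using source_color_relI[of h k] abc by simp
  qed
qed

end

theorem mainTheorem7:
  fixes Obj :: "'o set" and Mor :: "'m set"
    and src tgt :: "'m \<Rightarrow> 'o" and cmp :: "'m \<Rightarrow> 'm \<Rightarrow> 'm"
    and ident :: "'o \<Rightarrow> 'm" and lam :: "'m \<Rightarrow> 'c"
  assumes "is_groupoid Obj Mor src tgt cmp ident"
    and "morphism_colored Mor src tgt cmp lam"
    and "inverse_compatible Mor src tgt cmp ident lam"
  shows "equiv (I0 Obj ident lam) (rel0 Mor src tgt cmp ident lam)"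
proof -
  interpret morphism_colored_category Obj Mor src tgt cmp ident lam
    using assms(1,2) unfolding is_groupoid_def by unfold_locales blast+
  show ?thesis
    using equiv_source_color_rel by (simp only: rel0_eq_source_color_rel)
qed

end
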